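(* Let $\mathbb{F}$ be a field with $\operatorname{char}\mathbb{F}\neq 2$, let $\xi,\eta\in\mathbb{F}\setminus\{0,1\}$ with $\xi\neq\eta$, and let $M$ be an axial decomposition algebra of Majorana type $(\xi,\eta)$. Then $M$ is dihedral if and only if $M$ is generated (as an algebra) by two axes and there exists an automorphism of $M$ which interchanges these two generating axes.
   Context: $M$ is a commutative nonassociative algebra over $\mathbb{F}$. Let $\Phi:\{0,1,2,3\}\to\mathbb{F}$ with $\Phi(0)=0$, $\Phi(1)=1$, $\Phi(2)=\xi$, $\Phi(3)=\eta$. An element $a\in M$ is an axis (with parameters $\Phi$) if it comes with a decomposition $M=\bigoplus_{i=0}^3 M^i(a)$ (part of the data of the axis) such that: (1) $xa=\Phi(i)x$ for all $x\in M^i(a)$; (2) $M^1(a)=\mathbb{F}a$; (3) $M^0(a)M^i(a)\subset M^i(a)$ for all $i$, $M^2(a)M^2(a)\subset M^0(a)\oplus M^1(a)$, $M^2(a)M^3(a)\subset M^3(a)$ and $M^3(a)M^3(a)\subset M^0(a)\oplus M^1(a)\oplus M^2(a)$. $M$ is an axial decomposition algebra of Majorana type $(\xi,\eta)$ if it has such an axis. For an axis $a$, its Miyamoto involution $\tau(a)$ is the automorphism of $M$ acting as the identity on $M^0(a)\oplus M^1(a)\oplus M^2(a)$ and as $-1$ on $M^3(a)$. $M$ is called dihedral if it is equipped with a sequence of axes $(a_i)_{i\in\mathbb{Z}}$ such that (D1) $M$ is generated as an algebra by the $a_i$; (D2) $a_i\mapsto a_{i+1}$ (for all $i$) extends to an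 automorphism of $M$; (D3) for every $j\in\mathbb{Z}$, the Miyamoto involution $\tau(a_j)$ maps $a_i$ to $a_{2j-i}$ for all $i$. *)

theory Defs
  imports Complex_Main
begin

definition comm_nonassoc_algebra ::
  "('f::field \<Rightarrow> 'm::ab_group_add \<Rightarrow> 'm) \<Rightarrow> ('m \<Rightarrow> 'm \<Rightarrow> 'm) \<Rightarrow> bool" where
  "comm_nonassoc_algebra smult mult \<longleftrightarrow>
     vector_space smult \<and>
     (\<forall>x y z. mult (x + y) z = mult x z + mult y z) \<and>
     (\<forall>c x y. mult (smult c x) y = smult c (mult x y)) \<and>
     (\<forall>x y. mult x y = mult y x)"

definition Phi :: "'f::field \<Rightarrow> 'f \<Rightarrow> nat \<Rightarrow> 'f" where
  "Phi xi eta i = (if i = 0 then 0 else if i = 1 then 1 else if i = 2 then xi else eta)"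

definition setsum :: "'m::ab_group_add set \<Rightarrow> 'm set \<Rightarrow> 'm set" where
  "setsum A B = {x + y | x y. x \<in> A \<and> y \<in> B}"

definition is_axis ::
  "('f::field \<Rightarrow> 'm::ab_group_add \<Rightarrow> 'm) \<Rightarrow> ('m \<Rightarrow> 'm \<Rightarrow> 'm) \<Rightarrow> 'f \<Rightarrow> 'f
     \<Rightarrow> 'm \<Rightarrow> (nat \<Rightarrow> 'm set) \<Rightarrow> bool" where
  "is_axis smult mult xi eta a V \<longleftrightarrow>
     \<comment> \<open>direct sum decomposition M = V0 + V1 + V2 + V3 into subspaces\<close>
     (\<forall>i<4. module.subspace smult (V i)) \<and>
     (\<forall>x. \<exists>v0 v1 v2 v3. v0 \<in> V 0 \<and> v1 \<in> V 1 \<and> v2 \<in> V 2 \<and> v3 \<in> V 3 \<and>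
            x = v0 + v1 + v2 + v3) \<and>
     (\<forall>v0 v1 v2 v3. v0 \<in> V 0 \<longrightarrow> v1 \<in> V 1 \<longrightarrow> v2 \<in> V 2 \<longrightarrow> v3 \<in> V 3 \<longrightarrow>
            v0 + v1 + v2 + v3 = 0 \<longrightarrow> v0 = 0 \<and> v1 = 0 \<and> v2 = 0 \<and> v3 = 0) \<and>
     \<comment> \<open>(1) eigenvalues\<close>
     (\<forall>i<4. \<forall>x \<in> V i. mult x a = smult (Phi xi eta i) x) \<and>
     \<comment> \<open>(2) M^1(a) = F a\<close>
     V 1 = range (\<lambda>c. smult c a) \<and>
     \<comment> \<open>(3) fusion rules\<close>
     (\<forall>i<4. \<forall>x \<in> V 0. \<forall>y \<in> V i. mult x y \<in> V i) \<and>
     (\<forall>x \<in> V 2. \<forall>y \<in> V 2. mult x y \<in> setsum (V 0) (V 1)) \<and>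
     (\<forall>x \<in> V 2. \<forall>y \<in> V 3. mult x y \<in> V 3) \<and>
     (\<forall>x \<in> V 3. \<forall>y \<in> V 3. mult x y \<in> setsum (setsum (V 0) (V 1)) (V 2))"

definition miyamoto :: "(nat \<Rightarrow> 'm::ab_group_add set) \<Rightarrow> 'm \<Rightarrow> 'm" where
  "miyamoto V x = (THE y. \<exists>v0 v1 v2 v3. v0 \<in> V 0 \<and> v1 \<in> V 1 \<and> v2 \<in> V 2 \<and> v3 \<in> V 3 \<and>
                     x = v0 + v1 + v2 + v3 \<and> y = v0 + v1 + v2 - v3)"

definition is_automorphism ::
  "('f::field \<Rightarrow> 'm::ab_group_add \<Rightarrow> 'm) \<Rightarrow> ('m \<Rightarrow> 'm \<Rightarrow> 'm) \<Rightarrow> ('m \<Rightarrow> 'm) \<Rightarrow> bool" where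
  "is_automorphism smult mult \<phi> \<longleftrightarrow>
     bij \<phi> \<and>
     (\<forall>x y. \<phi> (x + y) = \<phi> x + \<phi> y) \<and>
     (\<forall>c x. \<phi> (smult c x) = smult c (\<phi> x)) \<and>
     (\<forall>x y. \<phi> (mult x y) = mult (\<phi> x) (\<phi> y))"

definition is_subalgebra ::
  "('f::field \<Rightarrow> 'm::ab_group_add \<Rightarrow> 'm) \<Rightarrow> ('m \<Rightarrow> 'm \<Rightarrow> 'm) \<Rightarrow> 'm set \<Rightarrow> bool" where
  "is_subalgebra smult mult S \<longleftrightarrow>
     module.subspace smult S \<and> (\<forall>x \<in> S. \<forall>y \<in> S. mult x y \<in> S)"

definition generates ::
  "('f::field \<Rightarrow> 'm::ab_group_add \<Rightarrow> 'm) \<Rightarrow> ('m \<Rightarrow> 'm \<Rightarrow> 'm) \<Rightarrow> 'm set \<Rightarrow> bool" where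
  "generates smult mult A \<longleftrightarrow>
     (\<forall>S. is_subalgebra smult mult S \<and> A \<subseteq> S \<longrightarrow> S = UNIV)"

definition is_axial_decomposition_algebra ::
  "('f::field \<Rightarrow> 'm::ab_group_add \<Rightarrow> 'm) \<Rightarrow> ('m \<Rightarrow> 'm \<Rightarrow> 'm) \<Rightarrow> 'f \<Rightarrow> 'f \<Rightarrow> bool" where
  "is_axial_decomposition_algebra smult mult xi eta \<longleftrightarrow>
     (\<exists>a V. is_axis smult mult xi eta a V)"

definition is_dihedral ::
  "('f::field \<Rightarrow> 'm::ab_group_add \<Rightarrow> 'm) \<Rightarrow> ('m \<Rightarrow> 'm \<Rightarrow> 'm) \<Rightarrow> 'f \<Rightarrow> 'f \<Rightarrow> bool" where
  "is_dihedral smult mult xi eta \<longleftrightarrow>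
     (\<exists>(a :: int \<Rightarrow> 'm) (V :: int \<Rightarrow> nat \<Rightarrow> 'm set).
        (\<forall>i. is_axis smult mult xi eta (a i) (V i)) \<and>
        generates smult mult (range a) \<and>
        (\<exists>\<phi>. is_automorphism smult mult \<phi> \<and> (\<forall>i. \<phi> (a i) = a (i + 1))) \<and>
        (\<forall>j i. miyamoto (V j) (a i) = a (2 * j - i)))"

end

(*
  The fusion rules make M = (M^0(a) + M^1(a) + M^2(a)) + M^3(a) a Z/2-grading, so the
  Miyamoto map tau(a) is an involutive automorphism fixing a. It preserves every subalgebra
  containing a, since the projection onto M^3(a) is a polynomial in multiplication by a; this
  is the only place where the parameters matter, and only eta not in {0, 1, xi} is needed.

  If M is dihedral, then a_(i+2) = tau(a_(i+1)) a_i and a_(i-1) = tau(a_i) a_(i+1), so a_0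
  and a_1 generate M, and theta tau(a_0) swaps them, where theta is the shift a_i -> a_(i+1).

  Conversely, if an automorphism phi swaps generating axes a and b, then phi^2 = 1, so
  tau = tau(a) conjugates theta = phi tau to its inverse. The orbit a_i = theta^i a, with the
  decomposition of a transported by theta^i, is dihedral: tau(a_j) = theta^j tau theta^(-j),
  hence tau(a_j) a_i = theta^j tau theta^(i-j) a = theta^(2j-i) a.
*)

theory Submission
  imports Defs
begin

definition int_funpow :: "int \<Rightarrow> ('a \<Rightarrow> 'a) \<Rightarrow> 'a \<Rightarrow> 'a" where
  "int_funpow i f = (if 0 \<le> i then f ^^ nat i else inv f ^^ nat (- i))"

lemma int_funpow_0 [simp]: "int_funpow 0 f x = x"
  by (simp add: int_funpow_def)

lemma int_funpow_1 [simp]: "int_funpow 1 f x = f x"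
  by (simp add: int_funpow_def)

lemma int_funpow_plus_1:
  assumes "bij f"
  shows "int_funpow (i + 1) f x = f (int_funpow i f x)"
proof (cases "0 \<le> i")
  case True
  then have "nat (i + 1) = Suc (nat i)" by simp
  with True show ?thesis by (simp add: int_funpow_def)
next
  case False
  then have "nat (- i) = Suc (nat (- (i + 1)))" by simp
  with False assms show ?thesis
    by (simp add: int_funpow_def surj_f_inv_f bij_is_surj)
qed

lemma int_funpow_minus_1:
  assumes "bij f"
  shows "int_funpow (i - 1) f x = inv f (int_funpow i f x)"
  using int_funpow_plus_1[OF assms, of "i - 1"] assms by (simp add: bij_is_inj inv_f_f)

lemma int_funpow_add:
  assumes "bij f"
  shows "int_funpow (i + j) f x = int_funpow i f (int_funpow j f x)"
proof (induction i rule: int_induct[where k = 0])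
  case (step1 i)
  then show ?case
    using int_funpow_plus_1[OF assms, of i] int_funpow_plus_1[OF assms, of "i + j"]
    by (simp add: ac_simps)
next
  case (step2 i)
  then show ?case
    using int_funpow_minus_1[OF assms, of i] int_funpow_minus_1[OF assms, of "i + j"]
    by (simp add: algebra_simps)
qed simp

lemma int_funpow_reflection:
  assumes "bij f" and reflect: "\<And>x. \<tau> (f x) = inv f (\<tau> x)"
  shows "\<tau> (int_funpow i f x) = int_funpow (- i) f (\<tau> x)"
proof (induction i rule: int_induct[where k = 0])
  case (step1 i)
  then show ?case
    using int_funpow_minus_1[OF assms(1), of "- i"] by (simp add: int_funpow_plus_1[OF assms(1)] reflect)
next
  case (step2 i)
  have "\<tau> (inv f y) = f (\<tau> y)" for y
    using reflect[of "inv f y"] assms(1)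
    by (metis bij_inv_eq_iff)
  with step2 show ?case
    using int_funpow_plus_1[OF assms(1), of "- i"] by (simp add: int_funpow_minus_1[OF assms(1)])
qed simp

lemma generates_superset: "generates smult mult A \<Longrightarrow> A \<subseteq> B \<Longrightarrow> generates smult mult B"
  unfolding generates_def by (meson order_trans)

definition even_part :: "(nat \<Rightarrow> 'm::ab_group_add set) \<Rightarrow> 'm set" where
  "even_part V = setsum (setsum (V 0) (V 1)) (V 2)"

locale nonassoc_comm_algebra =
  fixes smult :: "'f::field \<Rightarrow> 'm::ab_group_add \<Rightarrow> 'm"
    and mult :: "'m \<Rightarrow> 'm \<Rightarrow> 'm"
  assumes comm_nonassoc_algebra: "comm_nonassoc_algebra smult mult"
begin

sublocale module smult
  using comm_nonassoc_algebra by (simp add: comm_nonassoc_algebra_def vector_space_def module_def)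

lemma mult_add_left: "mult (x + y) z = mult x z + mult y z"
  and mult_scale_left: "mult (smult c x) y = smult c (mult x y)"
  and mult_commute: "mult x y = mult y x"
  using comm_nonassoc_algebra unfolding comm_nonassoc_algebra_def by blast+

lemma mult_add_right: "mult z (x + y) = mult z x + mult z y"
  by (metis mult_commute mult_add_left)

lemma mult_diff_left: "mult (x - y) z = mult x z - mult y z"
  using mult_add_left[of "x - y" y z] by (simp add: algebra_simps)

lemma mult_diff_right: "mult z (x - y) = mult z x - mult z y"
  by (metis mult_commute mult_diff_left)

lemma subspace_setsum:
  assumes A: "subspace A" and B: "subspace B"
  shows "subspace (setsum A B)"
  unfolding subspace_def setsum_def
proof (intro conjI ballI allI)
  show "0 \<in> {x + y |x y. x \<in> A \<and> y \<in> B}"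
    using subspace_0[OF A] subspace_0[OF B] by force
next
  fix u v assume "u \<in> {x + y |x y. x \<in> A \<and> y \<in> B}" "v \<in> {x + y |x y. x \<in> A \<and> y \<in> B}"
  then obtain x y x' y' where "x \<in> A" "y \<in> B" "x' \<in> A" "y' \<in> B" "u = x + y" "v = x' + y'"
    by blast
  moreover have "u + v = (x + x') + (y + y')"
    using calculation by (simp add: ac_simps)
  ultimately show "u + v \<in> {x + y |x y. x \<in> A \<and> y \<in> B}"
    using subspace_add[OF A] subspace_add[OF B] by blast
next
  fix c u assume "u \<in> {x + y |x y. x \<in> A \<and> y \<in> B}"
  then obtain x y where "x \<in> A" "y \<in> B" "u = x + y" by blast
  moreover have "smult c u = smult c x + smult c y"
    using calculation by (simp add: scale_right_distrib)
  ultimately show "smult c u \<in> {x + y |x y. x \<in> A \<and> y \<in> B}"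
    using subspace_scale[OF A] subspace_scale[OF B] by blast
qed

lemma setsum_left_subset: "0 \<in> B \<Longrightarrow> A \<subseteq> setsum A B"
  and setsum_right_subset: "0 \<in> A \<Longrightarrow> B \<subseteq> setsum A B"
  unfolding setsum_def by force+

lemma mult_setsum_left_closed:
  assumes "subspace S" and "x \<in> setsum A B" and "y \<in> C"
    and "\<And>x y. x \<in> A \<Longrightarrow> y \<in> C \<Longrightarrow> mult x y \<in> S"
    and "\<And>x y. x \<in> B \<Longrightarrow> y \<in> C \<Longrightarrow> mult x y \<in> S"
  shows "mult x y \<in> S"
proof -
  obtain u v where "u \<in> A" "v \<in> B" "x = u + v"
    using assms(2) unfolding setsum_def by blast
  then show ?thesis
    using assms(3-5) subspace_add[OF assms(1)] by (simp add: mult_add_left)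
qed

lemma automorphismD:
  assumes "is_automorphism smult mult f"
  shows automorphism_bij: "bij f"
    and automorphism_add: "f (x + y) = f x + f y"
    and automorphism_scale: "f (smult c x) = smult c (f x)"
    and automorphism_mult: "f (mult x y) = mult (f x) (f y)"
  using assms unfolding is_automorphism_def by auto

lemma automorphism_zero: "is_automorphism smult mult f \<Longrightarrow> f 0 = 0"
  using automorphism_add[of f 0 0] by simp

lemma automorphism_diff: "is_automorphism smult mult f \<Longrightarrow> f (x - y) = f x - f y"
  using automorphism_add[of f "x - y" y] by (simp add: algebra_simps)

lemma automorphism_comp:
  "is_automorphism smult mult f \<Longrightarrow> is_automorphism smult mult g \<Longrightarrow> is_automorphism smult mult (f \<circ> g)"
  unfolding is_automorphism_def by (auto intro: bij_comp)

lemma automorphism_inv: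
  assumes f: "is_automorphism smult mult f"
  shows "is_automorphism smult mult (inv f)"
proof -
  have bij: "bij f" and f_inv: "f (inv f x) = x" for x
    using automorphism_bij[OF f] by (auto simp: bij_is_surj surj_f_inv_f)
  have inv_eq: "inv f y = x" if "f x = y" for x y
    using inv_f_eq[OF bij_is_inj[OF bij] that] .
  show ?thesis
    unfolding is_automorphism_def
    by (intro conjI allI bij_imp_bij_inv[OF bij] inv_eq) (simp_all add: automorphismD[OF f] f_inv)
qed

lemma automorphism_id: "is_automorphism smult mult id"
  by (simp add: is_automorphism_def)

lemma automorphism_funpow: "is_automorphism smult mult f \<Longrightarrow> is_automorphism smult mult (f ^^ n)"
proof (induction n)
  case 0
  show ?case
    unfolding funpow.simps(1) by (rule automorphism_id)
next
  case (Suc n)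
  show ?case
    unfolding funpow.simps(2) by (rule automorphism_comp[OF Suc.prems Suc.IH[OF Suc.prems]])
qed

lemma automorphism_int_funpow:
  "is_automorphism smult mult f \<Longrightarrow> is_automorphism smult mult (int_funpow i f)"
  by (simp add: int_funpow_def automorphism_funpow automorphism_inv)

lemma automorphisms_eq_on_generators:
  assumes "generates smult mult A"
    and f: "is_automorphism smult mult f" and g: "is_automorphism smult mult g"
    and "\<And>x. x \<in> A \<Longrightarrow> f x = g x"
  shows "f x = g x"
proof -
  have "is_subalgebra smult mult {x. f x = g x}"
    unfolding is_subalgebra_def subspace_def
    by (simp add: automorphismD[OF f] automorphismD[OF g] automorphism_zero[OF f] automorphism_zero[OF g])
  then have "{x. f x = g x} = UNIV"
    using assms(1,4) unfolding generates_def by blast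
  then show ?thesis
    by blast
qed

lemma automorphism_image_subspace:
  assumes f: "is_automorphism smult mult f" and "subspace S"
  shows "subspace (f ` S)"
  unfolding subspace_def
proof (intro conjI ballI allI)
  show "0 \<in> f ` S"
    using automorphism_zero[OF f] subspace_0[OF \<open>subspace S\<close>] by (metis image_eqI)
  show "x + y \<in> f ` S" if x: "x \<in> f ` S" and y: "y \<in> f ` S" for x y
  proof -
    obtain u v where "u \<in> S" "v \<in> S" "x = f u" "y = f v"
      using x y by blast
    then show ?thesis
      using automorphism_add[OF f, of u v] subspace_add[OF \<open>subspace S\<close>] by (metis image_eqI)
  qed
  show "smult c x \<in> f ` S" if x: "x \<in> f ` S" for c x
  proof -
    obtain u where "u \<in> S" "x = f u"
      using x by blast
    then show ?thesis
      using automorphism_scale[OF f, of c u] subspace_scale[OF \<open>subspace S\<close>] by (metis image_eqI)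
  qed
qed

lemma automorphism_image_setsum:
  assumes f: "is_automorphism smult mult f"
  shows "f ` setsum A B = setsum (f ` A) (f ` B)"
  unfolding setsum_def
proof (intro equalityI subsetI)
  fix z
  assume "z \<in> f ` {x + y |x y. x \<in> A \<and> y \<in> B}"
  then obtain x y where "x \<in> A" "y \<in> B" "z = f x + f y"
    using automorphism_add[OF f] by blast
  then show "z \<in> {x + y |x y. x \<in> f ` A \<and> y \<in> f ` B}"
    by blast
next
  fix z
  assume "z \<in> {x + y |x y. x \<in> f ` A \<and> y \<in> f ` B}"
  then obtain x y where "x \<in> A" "y \<in> B" "z = f x + f y"
    by blast
  then show "z \<in> f ` {x + y |x y. x \<in> A \<and> y \<in> B}"
    unfolding automorphism_add[OF f, symmetric] by blast
qed

lemma automorphism_image_mult: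
  assumes f: "is_automorphism smult mult f" and "x \<in> f ` X" "y \<in> f ` Y"
    and "\<And>u v. u \<in> X \<Longrightarrow> v \<in> Y \<Longrightarrow> mult u v \<in> Z"
  shows "mult x y \<in> f ` Z"
  using assms(2-4) automorphism_mult[OF f] by (auto intro!: image_eqI)

lemma grading_reflection_automorphism:
  assumes E: "subspace E" and W: "subspace W"
    and decomposition: "\<And>x. \<exists>e\<in>E. \<exists>w\<in>W. x = e + w"
    and EE: "\<And>x y. x \<in> E \<Longrightarrow> y \<in> E \<Longrightarrow> mult x y \<in> E"
    and EW: "\<And>x y. x \<in> E \<Longrightarrow> y \<in> W \<Longrightarrow> mult x y \<in> W"
    and WW: "\<And>x y. x \<in> W \<Longrightarrow> y \<in> W \<Longrightarrow> mult x y \<in> E"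
    and f: "\<And>e w. e \<in> E \<Longrightarrow> w \<in> W \<Longrightarrow> f (e + w) = e - w"
  shows "is_automorphism smult mult f"
  unfolding is_automorphism_def
proof (intro conjI allI)
  have involution: "f (f x) = x" for x
  proof -
    obtain e w where "e \<in> E" "w \<in> W" "x = e + w" using decomposition by blast
    then show ?thesis using f[of e w] f[of e "- w"] subspace_neg[OF W] by simp
  qed
  show "bij f"
    by (rule o_bij[of f]) (simp_all add: fun_eq_iff involution)
next
  fix x y
  obtain e w where x: "e \<in> E" "w \<in> W" "x = e + w" using decomposition by blast
  obtain e' w' where y: "e' \<in> E" "w' \<in> W" "y = e' + w'" using decomposition by blast
  have "f (x + y) = f ((e + e') + (w + w'))"
    using x y by (simp add: ac_simps)
  then show "f (x + y) = f x + f y"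
    using f x y subspace_add[OF E] subspace_add[OF W] by simp
  have "f (mult x y) = f ((mult e e' + mult w w') + (mult e w' + mult w e'))"
    using x y by (simp add: mult_add_left mult_add_right ac_simps)
  also have "\<dots> = (mult e e' + mult w w') - (mult e w' + mult w e')"
    using x y EE WW EW mult_commute[of w e'] subspace_add[OF E] subspace_add[OF W] f by simp
  also have "\<dots> = mult (e - w) (e' - w')"
    by (simp add: mult_diff_left mult_diff_right algebra_simps)
  finally show "f (mult x y) = mult (f x) (f y)"
    using f x y by simp
next
  fix c x
  obtain e w where x: "e \<in> E" "w \<in> W" "x = e + w" using decomposition by blast
  then show "f (smult c x) = smult c (f x)"
    using f subspace_scale[OF E] subspace_scale[OF W]
    by (simp add: scale_right_distrib scale_right_diff_distrib)
qed

context
  fixes xi eta :: 'f and a :: 'm and V :: "nat \<Rightarrow> 'm set"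
  assumes axis: "is_axis smult mult xi eta a V"
begin

lemma axis_subspace: "i < 4 \<Longrightarrow> subspace (V i)"
  using axis unfolding is_axis_def by (elim conjE) metis

lemma axis_subspaces [simp]: "subspace (V 0)" "subspace (V 1)" "subspace (V 2)" "subspace (V 3)"
  by (simp_all add: axis_subspace)

lemma axis_decomposition:
  "\<exists>v0 v1 v2 v3. v0 \<in> V 0 \<and> v1 \<in> V 1 \<and> v2 \<in> V 2 \<and> v3 \<in> V 3 \<and> x = v0 + v1 + v2 + v3"
  using axis unfolding is_axis_def by (elim conjE) metis

lemma axis_direct:
  "v0 \<in> V 0 \<Longrightarrow> v1 \<in> V 1 \<Longrightarrow> v2 \<in> V 2 \<Longrightarrow> v3 \<in> V 3 \<Longrightarrow> v0 + v1 + v2 + v3 = 0 \<Longrightarrow>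
    v0 = 0 \<and> v1 = 0 \<and> v2 = 0 \<and> v3 = 0"
  using axis unfolding is_axis_def by (elim conjE) metis

lemma axis_eigenvector: "i < 4 \<Longrightarrow> x \<in> V i \<Longrightarrow> mult x a = smult (Phi xi eta i) x"
  using axis unfolding is_axis_def by (elim conjE) metis

lemma axis_one_space: "V 1 = range (\<lambda>c. smult c a)"
  using axis unfolding is_axis_def by (elim conjE) metis

lemma axis_fusion_0: "i < 4 \<Longrightarrow> x \<in> V 0 \<Longrightarrow> y \<in> V i \<Longrightarrow> mult x y \<in> V i"
  using axis unfolding is_axis_def by (elim conjE) metis

lemma axis_fusion_22: "x \<in> V 2 \<Longrightarrow> y \<in> V 2 \<Longrightarrow> mult x y \<in> setsum (V 0) (V 1)"
  using axis unfolding is_axis_def by (elim conjE) metis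

lemma axis_fusion_23: "x \<in> V 2 \<Longrightarrow> y \<in> V 3 \<Longrightarrow> mult x y \<in> V 3"
  using axis unfolding is_axis_def by (elim conjE) metis

lemma axis_fusion_33: "x \<in> V 3 \<Longrightarrow> y \<in> V 3 \<Longrightarrow> mult x y \<in> even_part V"
  using axis unfolding is_axis_def even_part_def by (elim conjE) metis

lemma axis_fusion_1:
  assumes "i < 4" "x \<in> V 1" "y \<in> V i"
  shows "mult x y \<in> V i"
proof -
  obtain c where "x = smult c a"
    using assms(2) axis_one_space by auto
  then have "mult x y = smult c (mult y a)"
    by (simp add: mult_scale_left mult_commute[of a y])
  then have "mult x y = smult c (smult (Phi xi eta i) y)"
    using axis_eigenvector[OF assms(1,3)] by simp
  then show ?thesis
    using assms(3) subspace_scale[OF axis_subspace[OF assms(1)]] by simp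
qed

lemma axis_in_one_space: "a \<in> V 1"
  using axis_one_space by (metis rangeI scale_one)

lemma miyamoto_components:
  assumes v: "v0 \<in> V 0" "v1 \<in> V 1" "v2 \<in> V 2" "v3 \<in> V 3"
  shows "miyamoto V (v0 + v1 + v2 + v3) = v0 + v1 + v2 - v3"
  unfolding miyamoto_def
proof (rule the_equality)
  fix y
  assume "\<exists>w0 w1 w2 w3. w0 \<in> V 0 \<and> w1 \<in> V 1 \<and> w2 \<in> V 2 \<and> w3 \<in> V 3 \<and>
    v0 + v1 + v2 + v3 = w0 + w1 + w2 + w3 \<and> y = w0 + w1 + w2 - w3"
  then obtain w0 w1 w2 w3 where w: "w0 \<in> V 0" "w1 \<in> V 1" "w2 \<in> V 2" "w3 \<in> V 3"
    and sum: "v0 + v1 + v2 + v3 = w0 + w1 + w2 + w3" and y: "y = w0 + w1 + w2 - w3"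
    by blast
  have "v0 - w0 \<in> V 0" "v1 - w1 \<in> V 1" "v2 - w2 \<in> V 2" "v3 - w3 \<in> V 3"
    using v w subspace_diff axis_subspaces by blast+
  then have "v0 - w0 = 0 \<and> v1 - w1 = 0 \<and> v2 - w2 = 0 \<and> v3 - w3 = 0"
    by (rule axis_direct) (use sum in \<open>simp add: algebra_simps\<close>)
  then show "y = v0 + v1 + v2 - v3"
    using y by simp
qed (use v in fast)

lemma even_part_subspace: "subspace (even_part V)"
  unfolding even_part_def by (intro subspace_setsum axis_subspaces)

lemma setsum_01_subset_even_part: "setsum (V 0) (V 1) \<subseteq> even_part V"
  unfolding even_part_def by (intro setsum_left_subset subspace_0 axis_subspaces)

lemma subset_even_part:
  assumes "i < 3"
  shows "V i \<subseteq> even_part V"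
proof -
  have "V 0 \<subseteq> setsum (V 0) (V 1)" "V 1 \<subseteq> setsum (V 0) (V 1)" "V 2 \<subseteq> even_part V"
    unfolding even_part_def
    by (intro setsum_left_subset setsum_right_subset subspace_0 subspace_setsum axis_subspaces)+
  moreover have "i = 0 \<or> i = 1 \<or> i = 2"
    using assms by auto
  ultimately show ?thesis
    using setsum_01_subset_even_part by (elim disjE) auto
qed

lemma even_odd_decomposition: "\<exists>e\<in>even_part V. \<exists>w\<in>V 3. x = e + w"
proof -
  obtain v0 v1 v2 v3 where v: "v0 \<in> V 0" "v1 \<in> V 1" "v2 \<in> V 2" "v3 \<in> V 3"
    and x: "x = v0 + v1 + v2 + v3"
    using axis_decomposition by blast
  have "v0 + v1 + v2 \<in> even_part V"
    using v unfolding even_part_def setsum_def by blast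
  with v x show ?thesis by blast
qed

lemma miyamoto_even_odd:
  assumes "e \<in> even_part V" "w \<in> V 3"
  shows "miyamoto V (e + w) = e - w"
proof -
  obtain u0 u1 u2 where "u0 \<in> V 0" "u1 \<in> V 1" "u2 \<in> V 2" "e = u0 + u1 + u2"
    using assms(1) unfolding even_part_def setsum_def by blast
  with miyamoto_components assms(2) show ?thesis by simp
qed

lemma mult_even_closed:
  assumes "subspace S" "x \<in> even_part V" "y \<in> C"
    and "\<And>i u v. i < 3 \<Longrightarrow> u \<in> V i \<Longrightarrow> v \<in> C \<Longrightarrow> mult u v \<in> S"
  shows "mult x y \<in> S"
proof -
  have "mult u v \<in> S" if "u \<in> setsum (V 0) (V 1)" "v \<in> C" for u v
    by (rule mult_setsum_left_closed[OF assms(1) that]) (use assms(4)[of 0] assms(4)[of 1] in auto)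
  then show ?thesis
    by (rule mult_setsum_left_closed[OF assms(1) assms(2)[unfolded even_part_def] assms(3)])
      (use assms(4)[of 2] in auto)
qed

lemma mult_even_components:
  assumes "i < 3" "j < 3" "u \<in> V i" "v \<in> V j"
  shows "mult u v \<in> even_part V"
proof -
  have "i = 0 \<or> i = 1 \<or> i = 2" "j = 0 \<or> j = 1 \<or> j = 2"
    using assms(1,2) by auto
  then consider "i = 0" | "i = 1" | "j = 0" | "j = 1" | "i = 2" "j = 2"
    by blast
  then show ?thesis
  proof cases
    case 1
    then show ?thesis using axis_fusion_0[of j u v] subset_even_part[of j] assms by auto
  next
    case 2
    then show ?thesis using axis_fusion_1[of j u v] subset_even_part[of j] assms by auto
  next
    case 3
    then show ?thesis
      using axis_fusion_0[of i v u] subset_even_part[of i] mult_commute[of u v] assms by auto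
  next
    case 4
    then show ?thesis
      using axis_fusion_1[of i v u] subset_even_part[of i] mult_commute[of u v] assms by auto
  next
    case 5
    then show ?thesis using axis_fusion_22[of u v] setsum_01_subset_even_part assms by auto
  qed
qed

lemma mult_even_even:
  assumes "x \<in> even_part V" "y \<in> even_part V"
  shows "mult x y \<in> even_part V"
proof (rule mult_even_closed[OF even_part_subspace assms])
  fix i u v
  assume "i < 3" "u \<in> V i" "v \<in> even_part V"
  have "mult v u \<in> even_part V"
    by (rule mult_even_closed[OF even_part_subspace \<open>v \<in> even_part V\<close> \<open>u \<in> V i\<close>])
      (rule mult_even_components[OF _ \<open>i < 3\<close>])
  then show "mult u v \<in> even_part V"
    by (metis mult_commute)
qed

lemma mult_even_odd:
  assumes "x \<in> even_part V" "y \<in> V 3"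
  shows "mult x y \<in> V 3"
proof (rule mult_even_closed[OF axis_subspaces(4) assms])
  fix i u v
  assume "i < 3" "u \<in> V i" "v \<in> V 3"
  moreover have "i = 0 \<or> i = 1 \<or> i = 2"
    using \<open>i < 3\<close> by auto
  ultimately show "mult u v \<in> V 3"
    using axis_fusion_0[of 3 u v] axis_fusion_1[of 3 u v] axis_fusion_23[of u v] by auto
qed

lemma miyamoto_automorphism: "is_automorphism smult mult (miyamoto V)"
proof (rule grading_reflection_automorphism[OF even_part_subspace axis_subspaces(4)])
  show "\<exists>e\<in>even_part V. \<exists>w\<in>V 3. x = e + w" for x
    by (rule even_odd_decomposition)
qed (auto simp: mult_even_even mult_even_odd axis_fusion_33 miyamoto_even_odd)

lemma miyamoto_involution: "miyamoto V (miyamoto V x) = x"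
proof -
  obtain e w where "e \<in> even_part V" "w \<in> V 3" "x = e + w"
    using even_odd_decomposition by blast
  then show ?thesis
    using miyamoto_even_odd[of e w] miyamoto_even_odd[of e "- w"] subspace_neg by simp
qed

lemma miyamoto_axis: "miyamoto V a = a"
  using miyamoto_components[OF subspace_0 axis_in_one_space subspace_0 subspace_0] by simp

lemma subalgebra_odd_component:
  assumes eta: "eta \<noteq> 0" "eta \<noteq> 1" "eta \<noteq> xi"
    and S: "is_subalgebra smult mult S" "a \<in> S"
    and v: "v0 \<in> V 0" "v1 \<in> V 1" "v2 \<in> V 2" "v3 \<in> V 3" and "v0 + v1 + v2 + v3 \<in> S"
  shows "v3 \<in> S"
proof -
  have "subspace S" and mult_S: "\<And>x y. x \<in> S \<Longrightarrow> y \<in> S \<Longrightarrow> mult x y \<in> S"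
    using S(1) unfolding is_subalgebra_def by auto
  define shift where "shift l z = mult z a - smult l z" for l z
  have shift_S: "shift l z \<in> S" if "z \<in> S" for l z
    unfolding shift_def using that mult_S[OF that S(2)] \<open>subspace S\<close> subspace_diff subspace_scale
    by blast
  have shift: "shift l (smult c0 v0 + smult c1 v1 + smult c2 v2 + smult c3 v3) =
      smult (- l * c0) v0 + smult ((1 - l) * c1) v1 + smult ((xi - l) * c2) v2 + smult ((eta - l) * c3) v3"
    for l c0 c1 c2 c3
    using axis_eigenvector[OF _ v(1)] axis_eigenvector[OF _ v(2)] axis_eigenvector[OF _ v(3)]
      axis_eigenvector[OF _ v(4)]
    by (simp add: shift_def Phi_def mult_add_left mult_scale_left algebra_simps scale_left_diff_distrib
        scale_right_distrib scale_right_diff_distrib)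
  \<comment> \<open>\<open>R\<^sub>a (R\<^sub>a - 1) (R\<^sub>a - \<xi>)\<close> annihilates \<open>V 0 \<oplus> V 1 \<oplus> V 2\<close> and is the nonzero scalar
    \<open>\<eta> (\<eta> - 1) (\<eta> - \<xi>)\<close> on \<open>V 3\<close>.\<close>
  have "shift xi (v0 + v1 + v2 + v3) = smult (- xi) v0 + smult (1 - xi) v1 + smult (eta - xi) v3"
    using shift[of xi 1 1 1 1] by simp
  then have "shift 1 (shift xi (v0 + v1 + v2 + v3)) = smult xi v0 + smult ((eta - 1) * (eta - xi)) v3"
    using shift[of 1 "- xi" "1 - xi" 0 "eta - xi"] by simp
  then have "shift 0 (shift 1 (shift xi (v0 + v1 + v2 + v3))) = smult (eta * ((eta - 1) * (eta - xi))) v3"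
    using shift[of 0 xi 0 0 "(eta - 1) * (eta - xi)"] by simp
  moreover have "shift 0 (shift 1 (shift xi (v0 + v1 + v2 + v3))) \<in> S"
    using shift_S \<open>v0 + v1 + v2 + v3 \<in> S\<close> by blast
  ultimately have "smult (eta * ((eta - 1) * (eta - xi))) v3 \<in> S"
    by simp
  moreover have "eta * ((eta - 1) * (eta - xi)) \<noteq> 0"
    using eta by simp
  ultimately show ?thesis
    using subspace_scale[OF \<open>subspace S\<close>, of _ "inverse (eta * ((eta - 1) * (eta - xi)))"]
    by (metis scale_scale left_inverse scale_one)
qed

lemma miyamoto_subalgebra:
  assumes "eta \<noteq> 0" "eta \<noteq> 1" "eta \<noteq> xi"
    and S: "is_subalgebra smult mult S" "a \<in> S" and "x \<in> S"
  shows "miyamoto V x \<in> S"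
proof -
  obtain v0 v1 v2 v3 where v: "v0 \<in> V 0" "v1 \<in> V 1" "v2 \<in> V 2" "v3 \<in> V 3"
    and x: "x = v0 + v1 + v2 + v3"
    using axis_decomposition by blast
  have "v3 \<in> S"
    using subalgebra_odd_component[OF assms(1-5) v] assms(6) x by simp
  moreover have "miyamoto V x = x - v3 - v3"
    using miyamoto_components[OF v] x by (simp add: algebra_simps)
  moreover have "subspace S"
    using S(1) unfolding is_subalgebra_def by simp
  ultimately show ?thesis
    using \<open>x \<in> S\<close> subspace_diff by simp
qed

end

lemma automorphism_image_decomposition:
  assumes f: "is_automorphism smult mult f" and axis: "is_axis smult mult xi eta a V"
  shows "\<exists>v0 v1 v2 v3. v0 \<in> f ` V 0 \<and> v1 \<in> f ` V 1 \<and> v2 \<in> f ` V 2 \<and> v3 \<in> f ` V 3 \<and>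
    x = v0 + v1 + v2 + v3"
proof -
  obtain y where y: "x = f y"
    using automorphism_bij[OF f] by (metis bij_is_surj surjD)
  obtain v0 v1 v2 v3 where v: "v0 \<in> V 0" "v1 \<in> V 1" "v2 \<in> V 2" "v3 \<in> V 3"
    and "y = v0 + v1 + v2 + v3"
    using axis_decomposition[OF axis] by blast
  then have "x = f v0 + f v1 + f v2 + f v3"
    using y automorphism_add[OF f] by simp
  with v show ?thesis
    by blast
qed

lemma automorphism_image_direct:
  assumes f: "is_automorphism smult mult f" and axis: "is_axis smult mult xi eta a V"
    and "v0 \<in> f ` V 0" "v1 \<in> f ` V 1" "v2 \<in> f ` V 2" "v3 \<in> f ` V 3"
    and sum: "v0 + v1 + v2 + v3 = 0"
  shows "v0 = 0 \<and> v1 = 0 \<and> v2 = 0 \<and> v3 = 0"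
proof -
  obtain u0 u1 u2 u3 where u: "u0 \<in> V 0" "u1 \<in> V 1" "u2 \<in> V 2" "u3 \<in> V 3"
    and v: "v0 = f u0" "v1 = f u1" "v2 = f u2" "v3 = f u3"
    using assms(3-6) by blast
  have "f (u0 + u1 + u2 + u3) = f 0"
    using sum v automorphism_add[OF f] automorphism_zero[OF f] by simp
  then have "u0 + u1 + u2 + u3 = 0"
    using automorphism_bij[OF f] by (simp add: bij_is_inj inj_eq)
  then show ?thesis
    using axis_direct[OF axis u] v automorphism_zero[OF f] by simp
qed

lemma is_axis_image:
  assumes f: "is_automorphism smult mult f" and axis: "is_axis smult mult xi eta a V"
  shows "is_axis smult mult xi eta (f a) (\<lambda>n. f ` V n)"
proof -
  have subspaces: "\<forall>i<4. subspace (f ` V i)"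
    using automorphism_image_subspace[OF f] axis_subspace[OF axis] by blast
  have eigenvectors: "\<forall>i<4. \<forall>x \<in> f ` V i. mult x (f a) = smult (Phi xi eta i) x"
    using axis_eigenvector[OF axis] automorphism_mult[OF f, symmetric] automorphism_scale[OF f]
    by auto
  have one_space: "f ` V 1 = range (\<lambda>c. smult c (f a))"
    unfolding axis_one_space[OF axis] by (auto simp: automorphism_scale[OF f] image_image)
  have fusion_0: "\<forall>i<4. \<forall>x \<in> f ` V 0. \<forall>y \<in> f ` V i. mult x y \<in> f ` V i"
    using automorphism_image_mult[OF f] axis_fusion_0[OF axis] by meson
  have fusion_22: "\<forall>x \<in> f ` V 2. \<forall>y \<in> f ` V 2. mult x y \<in> setsum (f ` V 0) (f ` V 1)"
    using automorphism_image_mult[OF f _ _ axis_fusion_22[OF axis]]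
    unfolding automorphism_image_setsum[OF f] by blast
  have fusion_23: "\<forall>x \<in> f ` V 2. \<forall>y \<in> f ` V 3. mult x y \<in> f ` V 3"
    using automorphism_image_mult[OF f _ _ axis_fusion_23[OF axis]] by blast
  have fusion_33:
    "\<forall>x \<in> f ` V 3. \<forall>y \<in> f ` V 3. mult x y \<in> setsum (setsum (f ` V 0) (f ` V 1)) (f ` V 2)"
    using automorphism_image_mult[OF f _ _ axis_fusion_33[OF axis]]
    unfolding even_part_def automorphism_image_setsum[OF f] by blast
  show ?thesis
    unfolding is_axis_def
    using subspaces automorphism_image_decomposition[OF f axis] automorphism_image_direct[OF f axis]
      eigenvectors one_space fusion_0 fusion_22 fusion_23 fusion_33
    by blast
qed

lemma miyamoto_image:
  assumes f: "is_automorphism smult mult f" and axis: "is_axis smult mult xi eta a V"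
  shows "miyamoto (\<lambda>n. f ` V n) (f y) = f (miyamoto V y)"
proof -
  obtain v0 v1 v2 v3 where v: "v0 \<in> V 0" "v1 \<in> V 1" "v2 \<in> V 2" "v3 \<in> V 3"
    and y: "y = v0 + v1 + v2 + v3"
    using axis_decomposition[OF axis] by blast
  have "miyamoto (\<lambda>n. f ` V n) (f v0 + f v1 + f v2 + f v3) = f v0 + f v1 + f v2 - f v3"
    using miyamoto_components[OF is_axis_image[OF f axis]] v by simp
  moreover have "f (miyamoto V y) = f v0 + f v1 + f v2 - f v3"
    using miyamoto_components[OF axis v] y automorphism_add[OF f] automorphism_diff[OF f] by simp
  ultimately show ?thesis
    using y automorphism_add[OF f] by simp
qed

lemma consecutive_axes_generate:
  assumes eta: "eta \<noteq> 0" "eta \<noteq> 1" "eta \<noteq> xi"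
    and axes: "\<And>i. is_axis smult mult xi eta (A i) (W i)"
    and reflect: "\<And>j i :: int. miyamoto (W j) (A i) = A (2 * j - i)"
    and gen: "generates smult mult (range A)"
  shows "generates smult mult {A 0, A 1}"
  unfolding generates_def
proof (intro allI impI)
  fix S
  assume S: "is_subalgebra smult mult S \<and> {A 0, A 1} \<subseteq> S"
  have "A i \<in> S \<and> A (i + 1) \<in> S" for i
  proof (induction i rule: int_induct[where k = 0])
    case (step1 i)
    have "A (i + 1 + 1) = miyamoto (W (i + 1)) (A i)"
      using reflect[of "i + 1" i] by (simp add: algebra_simps)
    then show ?case
      using step1 miyamoto_subalgebra[OF axes eta] S by simp
  next
    case (step2 i)
    have "A (i - 1) = miyamoto (W i) (A (i + 1))"
      using reflect[of i "i + 1"] by (simp add: algebra_simps)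
    then show ?case
      using step2 miyamoto_subalgebra[OF axes eta] S by simp
  qed (use S in simp)
  then have "range A \<subseteq> S"
    by blast
  then show "S = UNIV"
    using gen S unfolding generates_def by blast
qed

lemma dihedral_imp_swapped_generators:
  assumes eta: "eta \<noteq> 0" "eta \<noteq> 1" "eta \<noteq> xi" and "is_dihedral smult mult xi eta"
  shows "\<exists>a Va b Vb. is_axis smult mult xi eta a Va \<and> is_axis smult mult xi eta b Vb \<and>
    generates smult mult {a, b} \<and> (\<exists>\<phi>. is_automorphism smult mult \<phi> \<and> \<phi> a = b \<and> \<phi> b = a)"
proof -
  obtain A :: "int \<Rightarrow> 'm" and W \<theta> where axes: "\<And>i. is_axis smult mult xi eta (A i) (W i)"
    and gen: "generates smult mult (range A)"
    and \<theta>: "is_automorphism smult mult \<theta>" and shift: "\<And>i. \<theta> (A i) = A (i + 1)"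
    and reflect: "\<And>j i. miyamoto (W j) (A i) = A (2 * j - i)"
    using assms(4) unfolding is_dihedral_def by blast
  have "is_automorphism smult mult (\<theta> \<circ> miyamoto (W 0))"
    by (rule automorphism_comp[OF \<theta> miyamoto_automorphism[OF axes]])
  moreover have "(\<theta> \<circ> miyamoto (W 0)) (A 0) = A 1" "(\<theta> \<circ> miyamoto (W 0)) (A 1) = A 0"
    using shift[of 0] shift[of "- 1"] reflect[of 0 0] reflect[of 0 1] by simp_all
  ultimately show ?thesis
    using consecutive_axes_generate[OF eta axes reflect gen] axes by blast
qed

lemma dihedral_orbit:
  assumes axis: "is_axis smult mult xi eta a V" and \<theta>: "is_automorphism smult mult \<theta>"
    and inverted: "\<And>x. miyamoto V (\<theta> x) = inv \<theta> (miyamoto V x)"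
    and generates: "generates smult mult (range (\<lambda>i. int_funpow i \<theta> a))"
  shows "is_dihedral smult mult xi eta"
proof -
  have "bij \<theta>"
    using \<theta> by (rule automorphism_bij)
  define P where "P i = int_funpow i \<theta>" for i
  have P_aut: "is_automorphism smult mult (P i)" for i
    unfolding P_def by (rule automorphism_int_funpow[OF \<theta>])
  have shift: "\<theta> (P i a) = P (i + 1) a" for i
    using int_funpow_plus_1[OF \<open>bij \<theta>\<close>] by (simp add: P_def)
  have reflection: "miyamoto (\<lambda>n. P j ` V n) (P i a) = P (2 * j - i) a" for j i
  proof -
    have "miyamoto (\<lambda>n. P j ` V n) (P i a) = miyamoto (\<lambda>n. P j ` V n) (P j (P (i - j) a))"
      using int_funpow_add[OF \<open>bij \<theta>\<close>, of j "i - j"] by (simp add: P_def)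
    also have "\<dots> = P j (miyamoto V (P (i - j) a))"
      by (rule miyamoto_image[OF P_aut axis])
    also have "\<dots> = P j (P (j - i) a)"
      using int_funpow_reflection[where \<tau> = "miyamoto V", OF \<open>bij \<theta>\<close> inverted, of "i - j" a]
      by (simp add: P_def miyamoto_axis[OF axis])
    also have "\<dots> = P (2 * j - i) a"
      using int_funpow_add[OF \<open>bij \<theta>\<close>, of j "j - i"] by (simp add: P_def)
    finally show ?thesis .
  qed
  show ?thesis
    unfolding is_dihedral_def
  proof (intro exI[where x = "\<lambda>i. P i a"] exI[where x = "\<lambda>i n. P i ` V n"] conjI allI)
    show "is_axis smult mult xi eta (P i a) (\<lambda>n. P i ` V n)" for i
      by (rule is_axis_image[OF P_aut axis])
    show "generates smult mult (range (\<lambda>i. P i a))"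
      using generates by (simp add: P_def)
    show "\<exists>\<psi>. is_automorphism smult mult \<psi> \<and> (\<forall>i. \<psi> (P i a) = P (i + 1) a)"
      using \<theta> shift by blast
  qed (fact reflection)
qed

lemma swapped_generators_imp_dihedral:
  assumes axis: "is_axis smult mult xi eta a Va"
    and gen: "generates smult mult {a, b}"
    and \<phi>: "is_automorphism smult mult \<phi>" "\<phi> a = b" "\<phi> b = a"
  shows "is_dihedral smult mult xi eta"
proof -
  have \<phi>\<phi>: "\<phi> (\<phi> x) = x" for x
  proof -
    have "(\<phi> \<circ> \<phi>) x = id x"
      by (rule automorphisms_eq_on_generators[OF gen automorphism_comp[OF \<phi>(1) \<phi>(1)] automorphism_id])
        (use \<phi> in auto)
    then show ?thesis
      by simp
  qed
  define \<tau> where "\<tau> = miyamoto Va"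
  have \<tau>: "is_automorphism smult mult \<tau>" "\<tau> a = a" "\<tau> (\<tau> x) = x" for x
    unfolding \<tau>_def
    by (rule miyamoto_automorphism[OF axis] miyamoto_axis[OF axis] miyamoto_involution[OF axis])+
  define \<theta> where "\<theta> = \<phi> \<circ> \<tau>"
  have \<theta>: "is_automorphism smult mult \<theta>"
    unfolding \<theta>_def by (rule automorphism_comp[OF \<phi>(1) \<tau>(1)])
  \<comment> \<open>\<open>\<tau>\<close> and \<open>\<phi>\<close> are involutions, so \<open>\<tau>\<close> inverts \<open>\<theta> = \<phi> \<tau>\<close> by conjugation.\<close>
  have "\<tau> (\<theta> x) = inv \<theta> (\<tau> x)" for x
    by (rule inv_f_eq[OF bij_is_inj[OF automorphism_bij[OF \<theta>]], symmetric])
      (simp add: \<theta>_def \<tau> \<phi>\<phi>)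
  moreover have "{a, b} \<subseteq> range (\<lambda>i. int_funpow i \<theta> a)"
    using rangeI[of "\<lambda>i. int_funpow i \<theta> a" 0] rangeI[of "\<lambda>i. int_funpow i \<theta> a" 1] \<phi>(2) \<tau>(2)
    by (simp add: \<theta>_def)
  ultimately show ?thesis
    using dihedral_orbit[OF axis \<theta>] generates_superset[OF gen] unfolding \<tau>_def by blast
qed

end

theorem proposition2:
  fixes smult :: "'f::field \<Rightarrow> 'm::ab_group_add \<Rightarrow> 'm"
    and mult :: "'m \<Rightarrow> 'm \<Rightarrow> 'm"
    and xi eta :: 'f
  assumes "(2::'f) \<noteq> 0"
    and "xi \<noteq> 0" and "xi \<noteq> 1" and "eta \<noteq> 0" and "eta \<noteq> 1" and "xi \<noteq> eta"
    and "comm_nonassoc_algebra smult mult"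
    and "is_axial_decomposition_algebra smult mult xi eta"
  shows "is_dihedral smult mult xi eta \<longleftrightarrow>
    (\<exists>a Va b Vb. is_axis smult mult xi eta a Va \<and> is_axis smult mult xi eta b Vb \<and>
       generates smult mult {a, b} \<and>
       (\<exists>\<phi>. is_automorphism smult mult \<phi> \<and> \<phi> a = b \<and> \<phi> b = a))"
proof -
  interpret nonassoc_comm_algebra smult mult
    by (rule nonassoc_comm_algebra.intro) (fact assms(7))
  show ?thesis
    using dihedral_imp_swapped_generators[of eta xi] swapped_generators_imp_dihedral assms(4-6)
    by blast
qed

end
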